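(* Let $T$ be a complete theory and suppose the formula $\theta(x;y)$ has the $\infty$-compatible order property. Then the formula $\varphi(x;y,z):=\theta(x;y)\wedge\neg\theta(x;z)$ has $SOP_3$.
   Context: Work in a sufficiently saturated model of $T$. The characteristic sequence of $\theta$ is $P_n(y_1,\dots,y_n):=\exists x\bigwedge_{i\le n}\theta(x;y_i)$. $\theta$ has the $\infty$-compatible order property if there exist $\langle a_i,b_i:i<\omega\rangle$ such that for all $m<\omega$ and all indices, $P_{2m}(a_{i_1},b_{j_1},\dots,a_{i_m},b_{j_m})$ holds iff $\max\{i_1,\dots,i_m\}<\min\{j_1,\dots,j_m\}$. A formula $\varphi(x;w)$ has $SOP_3$ if there are a formula $\psi(x;w)$, an indiscernible sequence $\langle \bar a_i:i<\omega\rangle$ and $\langle c_j:j<\omega\rangle$ such that: (1) $\{\varphi(x;w),\psi(x;w)\}$ is contradictory; (2) $\varphi(c_j;\bar a_i)$ for $i\le j$ and $\psi(c_j;\bar a_i)$ for $i>j$; (3) for $i<j$, $\{\varphi(x;\bar a_j),\psi(x;\bar a_i)\}$ is contradictory. In particular $T$ then has $SOP_3$. *)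

theory Defs
  imports Main
begin

datatype 'f trm = Var nat | App 'f "'f trm list"

datatype ('f, 'r) fm =
    Eq "'f trm" "'f trm"
  | Rel 'r "'f trm list"
  | Neg "('f, 'r) fm"
  | Conj "('f, 'r) fm" "('f, 'r) fm"
  | Ex nat "('f, 'r) fm"

fun eval_trm :: "('f \<Rightarrow> 'm list \<Rightarrow> 'm) \<Rightarrow> (nat \<Rightarrow> 'm) \<Rightarrow> 'f trm \<Rightarrow> 'm" where
  "eval_trm F v (Var n) = v n"
| "eval_trm F v (App f ts) = F f (map (eval_trm F v) ts)"

fun sat :: "('f \<Rightarrow> 'm list \<Rightarrow> 'm) \<Rightarrow> ('r \<Rightarrow> 'm list \<Rightarrow> bool) \<Rightarrow> (nat \<Rightarrow> 'm)
             \<Rightarrow> ('f, 'r) fm \<Rightarrow> bool" where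
  "sat F R v (Eq s t) = (eval_trm F v s = eval_trm F v t)"
| "sat F R v (Rel r ts) = R r (map (eval_trm F v) ts)"
| "sat F R v (Neg \<phi>) = (\<not> sat F R v \<phi>)"
| "sat F R v (Conj \<phi> \<psi>) = (sat F R v \<phi> \<and> sat F R v \<psi>)"
| "sat F R v (Ex n \<phi>) = (\<exists>a. sat F R (v(n := a)) \<phi>)"

fun fv_trm :: "'f trm \<Rightarrow> nat set" where
  "fv_trm (Var n) = {n}"
| "fv_trm (App f ts) = (\<Union>t\<in>set ts. fv_trm t)"

fun fv :: "('f, 'r) fm \<Rightarrow> nat set" where
  "fv (Eq s t) = fv_trm s \<union> fv_trm t"
| "fv (Rel r ts) = (\<Union>t\<in>set ts. fv_trm t)"
| "fv (Neg \<phi>) = fv \<phi>"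
| "fv (Conj \<phi> \<psi>) = fv \<phi> \<union> fv \<psi>"
| "fv (Ex n \<phi>) = fv \<phi> - {n}"

text \<open>Renaming all variables (free and bound) by a map g; for injective g this is
  capture-free.\<close>

fun rename_trm :: "(nat \<Rightarrow> nat) \<Rightarrow> 'f trm \<Rightarrow> 'f trm" where
  "rename_trm g (Var n) = Var (g n)"
| "rename_trm g (App f ts) = App f (map (rename_trm g) ts)"

fun rename :: "(nat \<Rightarrow> nat) \<Rightarrow> ('f, 'r) fm \<Rightarrow> ('f, 'r) fm" where
  "rename g (Eq s t) = Eq (rename_trm g s) (rename_trm g t)"
| "rename g (Rel r ts) = Rel r (map (rename_trm g) ts)"
| "rename g (Neg \<phi>) = Neg (rename g \<phi>)"
| "rename g (Conj \<phi> \<psi>) = Conj (rename g \<phi>) (rename g \<psi>)"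
| "rename g (Ex n \<phi>) = Ex (g n) (rename g \<phi>)"

definition assign :: "nat list \<Rightarrow> 'm list \<Rightarrow> nat \<Rightarrow> 'm" where
  "assign vs as n = (case map_of (zip vs as) n of Some a \<Rightarrow> a | None \<Rightarrow> undefined)"

text \<open>\<open>holds F R \<phi> xs ws c d\<close>: the formula \<open>\<phi>(x;w)\<close> (x-variables xs, w-variables ws)
  holds of the tuples c, d.\<close>

definition holds :: "('f \<Rightarrow> 'm list \<Rightarrow> 'm) \<Rightarrow> ('r \<Rightarrow> 'm list \<Rightarrow> bool) \<Rightarrow> ('f, 'r) fm
     \<Rightarrow> nat list \<Rightarrow> nat list \<Rightarrow> 'm list \<Rightarrow> 'm list \<Rightarrow> bool" where
  "holds F R \<phi> xs ws c d = sat F R (assign (xs @ ws) (c @ d)) \<phi>"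

text \<open>A formula with parameters is a pair (formula, valuation) where the valuation
  sends all free variables other than x into A.\<close>

definition omega_saturated :: "('f \<Rightarrow> 'm list \<Rightarrow> 'm) \<Rightarrow> ('r \<Rightarrow> 'm list \<Rightarrow> bool) \<Rightarrow> bool" where
  "omega_saturated F R \<longleftrightarrow>
     (\<forall>(A :: 'm set) (p :: (('f, 'r) fm \<times> (nat \<Rightarrow> 'm)) set) (x :: nat).
        finite A \<longrightarrow> (\<forall>(\<phi>, v) \<in> p. \<forall>n \<in> fv \<phi> - {x}. v n \<in> A) \<longrightarrow>
        (\<forall>q \<subseteq> p. finite q \<longrightarrow> (\<exists>a. \<forall>(\<phi>, v) \<in> q. sat F R (v(x := a)) \<phi>)) \<longrightarrow>
        (\<exists>a. \<forall>(\<phi>, v) \<in> p. sat F R (v(x := a)) \<phi>))"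

text \<open>\<open>\<theta>(x;y)\<close> with x-variables xs and y-variables ys. \<open>P\<^sub>2\<^sub>m(a\<^sub>i\<^sub>1, b\<^sub>j\<^sub>1, ..., a\<^sub>i\<^sub>m, b\<^sub>j\<^sub>m)\<close>
  is \<open>\<exists>x. \<And>\<^sub>k \<theta>(x; a\<^sub>i\<^sub>k) \<and> \<theta>(x; b\<^sub>j\<^sub>k)\<close>; it must hold iff max I < min J.\<close>

definition infty_COP :: "('f \<Rightarrow> 'm list \<Rightarrow> 'm) \<Rightarrow> ('r \<Rightarrow> 'm list \<Rightarrow> bool) \<Rightarrow> ('f, 'r) fm
     \<Rightarrow> nat list \<Rightarrow> nat list \<Rightarrow> bool" where
  "infty_COP F R \<theta> xs ys \<longleftrightarrow>
     (\<exists>a b :: nat \<Rightarrow> 'm list.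
        (\<forall>i. length (a i) = length ys \<and> length (b i) = length ys) \<and>
        (\<forall>(m :: nat) (I :: nat \<Rightarrow> nat) (J :: nat \<Rightarrow> nat).
           (\<exists>c. length c = length xs \<and>
                (\<forall>k<m. holds F R \<theta> xs ys c (a (I k)) \<and> holds F R \<theta> xs ys c (b (J k))))
           \<longleftrightarrow> (\<forall>k<m. \<forall>l<m. I k < J l)))"

definition indiscernible :: "('f \<Rightarrow> 'm list \<Rightarrow> 'm) \<Rightarrow> ('r \<Rightarrow> 'm list \<Rightarrow> bool)
     \<Rightarrow> nat \<Rightarrow> (nat \<Rightarrow> 'm list) \<Rightarrow> bool" where
  "indiscernible F R n A \<longleftrightarrow>
     (\<forall>i. length (A i) = n) \<and>
     (\<forall>(\<chi> :: ('f, 'r) fm) (k :: nat) (vs :: nat list) (s :: nat \<Rightarrow> nat) (t :: nat \<Rightarrow> nat).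
        length vs = k * n \<longrightarrow> distinct vs \<longrightarrow> fv \<chi> \<subseteq> set vs \<longrightarrow>
        strict_mono_on {..<k} s \<longrightarrow> strict_mono_on {..<k} t \<longrightarrow>
        (sat F R (assign vs (concat (map (A \<circ> s) [0..<k]))) \<chi> \<longleftrightarrow>
         sat F R (assign vs (concat (map (A \<circ> t) [0..<k]))) \<chi>))"

text \<open>\<open>\<phi>(x;w)\<close> (x-variables xs, w-variables ws) has SOP_3.  "Contradictory" is
  evaluated in the (saturated) model: no tuple satisfies the set.\<close>

definition has_SOP3 :: "('f \<Rightarrow> 'm list \<Rightarrow> 'm) \<Rightarrow> ('r \<Rightarrow> 'm list \<Rightarrow> bool) \<Rightarrow> ('f, 'r) fm
     \<Rightarrow> nat list \<Rightarrow> nat list \<Rightarrow> bool" where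
  "has_SOP3 F R \<phi> xs ws \<longleftrightarrow>
     (\<exists>(\<psi> :: ('f, 'r) fm) (A :: nat \<Rightarrow> 'm list) (C :: nat \<Rightarrow> 'm list).
        fv \<psi> \<subseteq> set xs \<union> set ws \<and>
        indiscernible F R (length ws) A \<and>
        (\<forall>j. length (C j) = length xs) \<and>
        \<comment> \<open>(1)\<close>
        \<not> (\<exists>c d. length c = length xs \<and> length d = length ws \<and>
                 holds F R \<phi> xs ws c d \<and> holds F R \<psi> xs ws c d) \<and>
        \<comment> \<open>(2)\<close>
        (\<forall>i j. (i \<le> j \<longrightarrow> holds F R \<phi> xs ws (C j) (A i)) \<and>
               (j < i \<longrightarrow> holds F R \<psi> xs ws (C j) (A i))) \<and>
        \<comment> \<open>(3)\<close>
        (\<forall>i j. i < j \<longrightarrow>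
           \<not> (\<exists>c. length c = length xs \<and>
                  holds F R \<phi> xs ws c (A j) \<and> holds F R \<psi> xs ws c (A i))))"

text \<open>Variables are renamed: x-variable n becomes 2n, y-variable n becomes 2n, and the
  copy z of y-variable n becomes 2n+1 (both renamings are injective).\<close>

definition phi_of :: "('f, 'r) fm \<Rightarrow> nat list \<Rightarrow> ('f, 'r) fm" where
  "phi_of \<theta> xs =
     Conj (rename (\<lambda>n. 2 * n) \<theta>)
          (Neg (rename (\<lambda>n. if n \<in> set xs then 2 * n else 2 * n + 1) \<theta>))"

end

theory Submission
  imports Defs "HOL-Library.Ramsey" "HOL-Library.Nat_Bijection"
begin

text \<open>Let \<open>a\<^sub>i, b\<^sub>i\<close> witness the \<open>\<infinity>\<close>-compatible order property and put \<open>A\<^sub>i = a\<^sub>i b\<^sub>i\<close>.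
  Since \<open>\<theta>(c; a\<^sub>i) \<and> \<theta>(c; b\<^sub>j)\<close> forces \<open>i < j\<close>, along any increasing subsequence the formulas
  \<open>\<phi>(x; A\<^sub>i)\<close> and \<open>\<psi>(x; A\<^sub>i) = \<theta>(x; b\<^sub>i)\<close> satisfy clauses (1)-(3) of \<open>SOP\<^sub>3\<close>, the
  witnesses \<open>C\<^sub>j\<close> being realizations of \<open>P\<^sub>2\<^sub>m\<close> with the \<open>a\<close>'s up to \<open>j\<close> and finitely many
  \<open>b\<close>'s after \<open>j\<close>. Ramsey's theorem makes any finite part of indiscernibility hold along
  a subsequence, so every finite part of the whole configuration is satisfiable, and
  \<open>\<omega>\<close>-saturation, applied one variable at a time, realizes all of it at once.\<close>

lemma eval_trm_cong: "(\<forall>n\<in>fv_trm t. v n = w n) \<Longrightarrow> eval_trm F v t = eval_trm F w t"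
proof (induction t)
  case (App f ts)
  then have "map (eval_trm F v) ts = map (eval_trm F w) ts" by auto
  then show ?case by (metis eval_trm.simps(2))
qed simp

lemma sat_cong: "(\<forall>n\<in>fv \<phi>. v n = w n) \<Longrightarrow> sat F R v \<phi> = sat F R w \<phi>"
proof (induction \<phi> arbitrary: v w)
  case (Eq s t)
  then show ?case using eval_trm_cong[of s v w F] eval_trm_cong[of t v w F] by simp
next
  case (Rel r ts)
  then have "map (eval_trm F v) ts = map (eval_trm F w) ts"
    by (auto intro!: eval_trm_cong)
  then show ?case by (metis sat.simps(2))
next
  case (Conj \<phi> \<psi>)
  then have "sat F R v \<phi> = sat F R w \<phi>" "sat F R v \<psi> = sat F R w \<psi>"
    by (auto intro!: Conj.IH)
  then show ?case by simp
next
  case (Ex n \<phi>)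
  then have "sat F R (v(n := a)) \<phi> = sat F R (w(n := a)) \<phi>" for a
    by (intro Ex.IH) auto
  then show ?case by simp
qed simp

lemma eval_trm_rename: "eval_trm F v (rename_trm g t) = eval_trm F (v \<circ> g) t"
proof (induction t)
  case (App f ts)
  then have "map (eval_trm F v \<circ> rename_trm g) ts = map (eval_trm F (v \<circ> g)) ts"
    by (auto simp: comp_def)
  then show ?case by (metis eval_trm.simps(2) rename_trm.simps(2) map_map)
qed simp

lemma sat_rename: "inj g \<Longrightarrow> sat F R v (rename g \<phi>) = sat F R (v \<circ> g) \<phi>"
proof (induction \<phi> arbitrary: v)
  case (Ex n \<phi>)
  have "(v(g n := a)) \<circ> g = (v \<circ> g)(n := a)" for a
    using Ex.prems by (auto simp: fun_eq_iff inj_eq)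
  then show ?case
    using Ex by (simp del: fun_upd_apply add: comp_def)
qed (auto simp: eval_trm_rename comp_def)

lemma fv_rename: "inj g \<Longrightarrow> fv (rename g \<phi>) = g ` fv \<phi>"
proof -
  have "fv_trm (rename_trm g t) = g ` fv_trm t" for t
    by (induction t) auto
  then show "inj g \<Longrightarrow> ?thesis"
    by (induction \<phi>) (auto simp: image_Union inj_eq)
qed

lemma finite_fv: "finite (fv \<phi>)"
proof -
  have "finite (fv_trm t)" for t :: "'f trm"
    by (induction t) auto
  then show ?thesis
    by (induction \<phi>) auto
qed

lemma assign_nth:
  "distinct vs \<Longrightarrow> q < length vs \<Longrightarrow> q < length ds \<Longrightarrow> assign vs ds (vs ! q) = ds ! q"
  unfolding assign_def
  by (subst map_of_is_SomeI[of _ _ "ds ! q"]) (auto simp: in_set_zip map_fst_zip_take)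

lemma map_assign: "distinct vs \<Longrightarrow> length ds = length vs \<Longrightarrow> map (assign vs ds) vs = ds"
  by (intro nth_equalityI) (auto simp: assign_nth)

lemma assign_map:
  assumes "distinct vs" "length ds = length vs" "m \<in> set vs"
  shows "assign vs (map f ds) m = f (assign vs ds m)"
  using assms by (metis assign_nth in_set_conv_nth length_map nth_map)

lemma assign_map_self: "distinct vs \<Longrightarrow> m \<in> set vs \<Longrightarrow> assign vs (map f vs) m = f m"
  by (metis assign_nth in_set_conv_nth length_map nth_map)

lemma assign_in_set:
  "distinct vs \<Longrightarrow> length ds = length vs \<Longrightarrow> m \<in> set vs \<Longrightarrow> assign vs ds m \<in> set ds"
  by (metis assign_nth in_set_conv_nth nth_mem)

lemma inj_on_assign:
  assumes "distinct vs" "distinct ds" "length ds = length vs"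
  shows "inj_on (assign vs ds) (set vs)"
proof
  fix m m' assume "m \<in> set vs" "m' \<in> set vs" "assign vs ds m = assign vs ds m'"
  then obtain q q' where "q < length vs" "q' < length vs" "m = vs ! q" "m' = vs ! q'" "ds ! q = ds ! q'"
    using assms by (metis assign_nth in_set_conv_nth)
  then show "m = m'"
    using assms by (simp add: nth_eq_iff_index_eq)
qed

lemma sat_eq_holds:
  assumes "distinct (xs @ ys)" "fv \<theta> \<subseteq> set xs \<union> set ys"
  shows "sat F R v \<theta> = holds F R \<theta> xs ys (map v xs) (map v ys)"
  unfolding holds_def
  using assms by (intro sat_cong) (auto simp: assign_map_self[of "xs @ ys", simplified])

fun Exs :: "nat list \<Rightarrow> ('f, 'r) fm \<Rightarrow> ('f, 'r) fm" where
  "Exs [] \<phi> = \<phi>"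
| "Exs (n # ns) \<phi> = Ex n (Exs ns \<phi>)"

lemma sat_Exs:
  "sat F R v (Exs ns \<phi>) \<longleftrightarrow> (\<exists>u. (\<forall>k. k \<notin> set ns \<longrightarrow> u k = v k) \<and> sat F R u \<phi>)"
proof (induction ns arbitrary: v)
  case Nil
  have "(\<forall>k. u k = v k) \<longleftrightarrow> u = v" for u
    by auto
  then show ?case by simp
next
  case (Cons n ns)
  show ?case
  proof
    assume "sat F R v (Exs (n # ns) \<phi>)"
    then obtain a where "sat F R (v(n := a)) (Exs ns \<phi>)"
      by auto
    then obtain u where "\<forall>k. k \<notin> set ns \<longrightarrow> u k = (v(n := a)) k" "sat F R u \<phi>"
      using Cons.IH by blast
    then show "\<exists>u. (\<forall>k. k \<notin> set (n # ns) \<longrightarrow> u k = v k) \<and> sat F R u \<phi>"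
      by (intro exI[of _ u]) auto
  next
    assume "\<exists>u. (\<forall>k. k \<notin> set (n # ns) \<longrightarrow> u k = v k) \<and> sat F R u \<phi>"
    then obtain u where "\<forall>k. k \<notin> set (n # ns) \<longrightarrow> u k = v k" "sat F R u \<phi>"
      by blast
    then have "sat F R (v(n := u n)) (Exs ns \<phi>)"
      using Cons.IH by auto
    then show "sat F R v (Exs (n # ns) \<phi>)" by auto
  qed
qed

lemma fv_Exs: "fv (Exs ns \<phi>) = fv \<phi> - set ns"
  by (induction ns) auto

fun Conjs :: "('f, 'r) fm list \<Rightarrow> ('f, 'r) fm" where
  "Conjs [] = Eq (Var 0) (Var 0)"
| "Conjs (\<phi> # \<phi>s) = Conj \<phi> (Conjs \<phi>s)"

lemma sat_Conjs: "sat F R v (Conjs \<phi>s) \<longleftrightarrow> (\<forall>\<phi>\<in>set \<phi>s. sat F R v \<phi>)"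
  by (induction \<phi>s) auto

lemma fv_Conjs: "fv (Conjs \<phi>s) \<subseteq> {0} \<union> (\<Union>\<phi>\<in>set \<phi>s. fv \<phi>)"
  by (induction \<phi>s) auto

definition Iff :: "('f, 'r) fm \<Rightarrow> ('f, 'r) fm \<Rightarrow> ('f, 'r) fm" where
  "Iff \<phi> \<psi> = Conj (Neg (Conj \<phi> (Neg \<psi>))) (Neg (Conj \<psi> (Neg \<phi>)))"

lemma sat_Iff [simp]: "sat F R v (Iff \<phi> \<psi>) \<longleftrightarrow> (sat F R v \<phi> \<longleftrightarrow> sat F R v \<psi>)"
  by (auto simp: Iff_def)

lemma sat_Exs_Conjs:
  assumes "set ns \<inter> {..n} = {}" "fv (Conjs \<phi>s) \<subseteq> set ns \<union> {..n}"
  shows "sat F R v (Exs ns (Conjs \<phi>s)) \<longleftrightarrow> (\<exists>w. (\<forall>k\<le>n. w k = v k) \<and> (\<forall>\<phi>\<in>set \<phi>s. sat F R w \<phi>))"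
proof
  assume "sat F R v (Exs ns (Conjs \<phi>s))"
  then show "\<exists>w. (\<forall>k\<le>n. w k = v k) \<and> (\<forall>\<phi>\<in>set \<phi>s. sat F R w \<phi>)"
    using assms(1) by (auto simp: sat_Exs sat_Conjs)
next
  assume "\<exists>w. (\<forall>k\<le>n. w k = v k) \<and> (\<forall>\<phi>\<in>set \<phi>s. sat F R w \<phi>)"
  then obtain w where w: "\<forall>k\<le>n. w k = v k" "\<forall>\<phi>\<in>set \<phi>s. sat F R w \<phi>"
    by blast
  define u where "u k = (if k \<in> set ns then w k else v k)" for k
  have "sat F R u (Conjs \<phi>s) = sat F R w (Conjs \<phi>s)"
    using assms(2) w(1) by (intro sat_cong) (auto simp: u_def)
  then have "sat F R u (Conjs \<phi>s)"
    using w(2) by (simp add: sat_Conjs)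
  moreover have "\<forall>k. k \<notin> set ns \<longrightarrow> u k = v k"
    by (simp add: u_def)
  ultimately show "sat F R v (Exs ns (Conjs \<phi>s))"
    by (auto simp: sat_Exs)
qed

section \<open>Compactness in \<open>\<omega>\<close>-saturated structures\<close>

definition finsat_over :: "('f \<Rightarrow> 'm list \<Rightarrow> 'm) \<Rightarrow> ('r \<Rightarrow> 'm list \<Rightarrow> bool) \<Rightarrow> ('f, 'r) fm set
    \<Rightarrow> nat \<Rightarrow> (nat \<Rightarrow> 'm) \<Rightarrow> bool" where
  "finsat_over F R S n V \<longleftrightarrow>
     (\<forall>\<Delta>\<subseteq>S. finite \<Delta> \<longrightarrow> (\<exists>w. (\<forall>k<n. w k = V k) \<and> (\<forall>\<phi>\<in>\<Delta>. sat F R w \<phi>)))"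

definition closures :: "('f, 'r) fm set \<Rightarrow> nat \<Rightarrow> (('f, 'r) fm list \<times> nat list) set" where
  "closures S n =
     {(\<phi>s, ns). set \<phi>s \<subseteq> S \<and> set ns \<inter> {..n} = {} \<and> fv (Conjs \<phi>s) \<subseteq> set ns \<union> {..n}}"

lemma fv_closure_below:
  "(\<phi>s, ns) \<in> closures S n \<Longrightarrow> fv (Exs ns (Conjs \<phi>s)) - {n} \<subseteq> {..<n}"
  by (auto simp: closures_def fv_Exs)

lemma finsat_over_closures:
  assumes "finsat_over F R S n V" "finite P" "P \<subseteq> closures S n"
  shows "\<exists>a. \<forall>(\<phi>s, ns)\<in>P. sat F R (V(n := a)) (Exs ns (Conjs \<phi>s))"
proof -
  have "(\<Union>(\<phi>s, ns)\<in>P. set \<phi>s) \<subseteq> S" "finite (\<Union>(\<phi>s, ns)\<in>P. set \<phi>s)"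
    using assms(2,3) by (auto simp: closures_def)
  then obtain w where w: "\<forall>k<n. w k = V k" "\<forall>\<phi>\<in>(\<Union>(\<phi>s, ns)\<in>P. set \<phi>s). sat F R w \<phi>"
    using assms(1) unfolding finsat_over_def by blast
  have "sat F R (V(n := w n)) (Exs ns (Conjs \<phi>s))" if "(\<phi>s, ns) \<in> P" for \<phi>s ns
  proof -
    have ns: "set ns \<inter> {..n} = {}" "fv (Conjs \<phi>s) \<subseteq> set ns \<union> {..n}"
      using that assms(3) by (auto simp: closures_def)
    have "\<forall>\<phi>\<in>set \<phi>s. sat F R w \<phi>"
      using that w(2) by blast
    moreover have "\<forall>k\<le>n. w k = (V(n := w n)) k"
      using w(1) by (simp add: le_less)
    ultimately show ?thesis
      using sat_Exs_Conjs[OF ns, of F R "V(n := w n)"] by blast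
  qed
  then show ?thesis
    by blast
qed

lemma finsat_over_Suc_if_closures:
  assumes "\<forall>(\<phi>s, ns)\<in>closures S n. sat F R V (Exs ns (Conjs \<phi>s))"
  shows "finsat_over F R S (Suc n) V"
  unfolding finsat_over_def
proof (intro allI impI)
  fix \<Delta> assume \<Delta>: "\<Delta> \<subseteq> S" "finite \<Delta>"
  then obtain \<phi>s where \<phi>s: "set \<phi>s = \<Delta>"
    using finite_list by blast
  have "finite ((\<Union>\<phi>\<in>\<Delta>. fv \<phi>) \<union> {0} - {..n})"
    using \<Delta> by (auto simp: finite_fv)
  then obtain ns where ns: "set ns = (\<Union>\<phi>\<in>\<Delta>. fv \<phi>) \<union> {0} - {..n}"
    using finite_list by blast
  have ns_fv: "set ns \<inter> {..n} = {}" "fv (Conjs \<phi>s) \<subseteq> set ns \<union> {..n}"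
    using fv_Conjs[of \<phi>s] \<phi>s ns by auto
  then have "(\<phi>s, ns) \<in> closures S n"
    using \<phi>s \<Delta> by (simp add: closures_def)
  then obtain w where w: "\<forall>k\<le>n. w k = V k" "\<forall>\<phi>\<in>set \<phi>s. sat F R w \<phi>"
    using assms sat_Exs_Conjs[OF ns_fv] by blast
  show "\<exists>w. (\<forall>k<Suc n. w k = V k) \<and> (\<forall>\<phi>\<in>\<Delta>. sat F R w \<phi>)"
    using w \<phi>s by (intro exI[of _ w]) (simp add: less_Suc_eq_le)
qed

text \<open>The value of variable \<open>n\<close> is found by realizing, over the finitely many values
  \<open>V 0, \<dots>, V (n - 1)\<close>, the type of all existential closures of finite parts of \<open>S\<close>
  that bind every variable above \<open>n\<close>.\<close>

lemma finsat_over_Suc: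
  fixes S :: "('f, 'r) fm set" and V :: "nat \<Rightarrow> 'm"
  assumes "omega_saturated F R" "finsat_over F R S n V"
  shows "\<exists>a. finsat_over F R S (Suc n) (V(n := a))"
proof -
  define closure :: "('f, 'r) fm list \<times> nat list \<Rightarrow> ('f, 'r) fm \<times> (nat \<Rightarrow> 'm)"
    where "closure = (\<lambda>(\<phi>s, ns). (Exs ns (Conjs \<phi>s), V))"
  have params: "\<forall>(\<phi>, v) \<in> closure ` closures S n. \<forall>k \<in> fv \<phi> - {n}. v k \<in> V ` {..<n}"
  proof
    fix p assume "p \<in> closure ` closures S n"
    then obtain c where c: "c \<in> closures S n" "p = closure c"
      by (rule imageE)
    obtain \<phi>s ns where "c = (\<phi>s, ns)"
      by (cases c)
    with c have "p = (Exs ns (Conjs \<phi>s), V)" "fv (Exs ns (Conjs \<phi>s)) - {n} \<subseteq> {..<n}"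
      using fv_closure_below[of \<phi>s ns S n] by (auto simp: closure_def)
    then show "case p of (\<phi>, v) \<Rightarrow> \<forall>k \<in> fv \<phi> - {n}. v k \<in> V ` {..<n}"
      by auto
  qed
  have finsat: "\<exists>a. \<forall>(\<phi>, v) \<in> q. sat F R (v(n := a)) \<phi>"
    if q: "q \<subseteq> closure ` closures S n" "finite q" for q
  proof -
    obtain P where P: "P \<subseteq> closures S n" "finite P" "q = closure ` P"
      using q by (meson finite_subset_image)
    obtain a where a: "\<forall>(\<phi>s, ns)\<in>P. sat F R (V(n := a)) (Exs ns (Conjs \<phi>s))"
      using finsat_over_closures[OF assms(2) P(2,1)] by blast
    have "sat F R (v(n := a)) \<phi>" if "(\<phi>, v) \<in> q" for \<phi> v
    proof -
      from that obtain c where c: "c \<in> P" "(\<phi>, v) = closure c"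
        using P(3) by blast
      obtain \<phi>s ns where "c = (\<phi>s, ns)"
        by (cases c)
      with a c show ?thesis
        by (auto simp: closure_def)
    qed
    then show ?thesis
      by (intro exI[of _ a]) auto
  qed
  obtain a where a: "\<forall>(\<phi>, v) \<in> closure ` closures S n. sat F R (v(n := a)) \<phi>"
    using assms(1)[unfolded omega_saturated_def, rule_format, OF _ params[rule_format] finsat]
    by blast
  have "sat F R (V(n := a)) (Exs ns (Conjs \<phi>s))" if "(\<phi>s, ns) \<in> closures S n" for \<phi>s ns
    using bspec[OF a imageI[OF that, of closure]] by (simp add: closure_def)
  then have "\<forall>(\<phi>s, ns)\<in>closures S n. sat F R (V(n := a)) (Exs ns (Conjs \<phi>s))"
    by blast
  then show ?thesis
    using finsat_over_Suc_if_closures by blast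
qed

lemma omega_saturated_compact:
  assumes sat: "omega_saturated F R"
    and finsat: "\<forall>\<Delta>\<subseteq>S. finite \<Delta> \<longrightarrow> (\<exists>w. \<forall>\<phi>\<in>\<Delta>. sat F R w \<phi>)"
  shows "\<exists>V. \<forall>\<phi>\<in>S. sat F R V \<phi>"
proof -
  define next_val where "next_val n Vn = Vn(n := SOME a. finsat_over F R S (Suc n) (Vn(n := a)))" for n Vn
  define Vs where "Vs = rec_nat (\<lambda>_. undefined) next_val"
  have Vs_Suc: "Vs (Suc n) = next_val n (Vs n)" for n
    by (simp add: Vs_def)
  have finsat_Vs: "finsat_over F R S n (Vs n)" for n
  proof (induction n)
    case 0
    then show ?case using finsat by (simp add: finsat_over_def Vs_def)
  next
    case (Suc n)
    then show ?case
      unfolding Vs_Suc next_val_def by (rule someI_ex[OF finsat_over_Suc[OF sat]])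
  qed
  define V where "V k = Vs (Suc k) k" for k
  have "\<forall>k<n. Vs n k = V k" for n
    by (induction n) (auto simp: V_def Vs_Suc next_val_def less_Suc_eq)
  then have finsat_V: "finsat_over F R S n V" for n
    using finsat_Vs[of n] by (simp add: finsat_over_def)
  show ?thesis
  proof (intro exI ballI)
    fix \<phi> assume "\<phi> \<in> S"
    obtain N where N: "\<forall>k\<in>fv \<phi>. k < N"
      using finite_fv[of \<phi>] finite_nat_bounded by blast
    obtain w where "\<forall>k<N. w k = V k" "sat F R w \<phi>"
      using finsat_V[of N] \<open>\<phi> \<in> S\<close> unfolding finsat_over_def
      by (metis empty_subsetI finite.emptyI finite_insert insert_subset singletonI)
    then show "sat F R V \<phi>"
      using N sat_cong[of \<phi> w V] by auto
  qed
qed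

section \<open>Homogeneous subsequences\<close>

lemma Ramsey_finite_family:
  fixes c :: "'a \<Rightarrow> nat set \<Rightarrow> bool" and r :: "'a \<Rightarrow> nat"
  assumes "finite \<Phi>"
  shows "\<exists>H. infinite H \<and> (\<forall>\<phi>\<in>\<Phi>. \<exists>b. \<forall>X. X \<subseteq> H \<and> finite X \<and> card X = r \<phi> \<longrightarrow> c \<phi> X = b)"
  using assms
proof (induction \<Phi> rule: finite_induct)
  case empty
  show ?case by blast
next
  case (insert \<phi> \<Phi>)
  then obtain H where H: "infinite H" "\<forall>\<phi>\<in>\<Phi>. \<exists>b. \<forall>X. X \<subseteq> H \<and> finite X \<and> card X = r \<phi> \<longrightarrow> c \<phi> X = b"
    by blast
  have "\<forall>X. X \<subseteq> H \<and> finite X \<and> card X = r \<phi> \<longrightarrow> (of_bool (c \<phi> X) :: nat) < 2"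
    by simp
  from Ramsey[OF H(1) this] obtain Y t where
    Y: "Y \<subseteq> H" "infinite Y" "\<forall>X. X \<subseteq> Y \<and> finite X \<and> card X = r \<phi> \<longrightarrow> of_bool (c \<phi> X) = (t :: nat)"
    by blast
  then have "\<forall>X. X \<subseteq> Y \<and> finite X \<and> card X = r \<phi> \<longrightarrow> c \<phi> X = (t = 1)"
    by (metis of_bool_eq_1_iff)
  moreover have "\<forall>\<phi>\<in>\<Phi>. \<exists>b. \<forall>X. X \<subseteq> Y \<and> finite X \<and> card X = r \<phi> \<longrightarrow> c \<phi> X = b"
    using H(2) Y(1) by (meson subset_trans)
  ultimately show ?case
    using Y(2) by blast
qed

lemma sorted_list_of_set_image_strict_mono_on:
  fixes f :: "nat \<Rightarrow> nat"
  assumes "strict_mono_on {..<k} f"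
  shows "sorted_list_of_set (f ` {..<k}) = map f [0..<k]"
proof -
  have "sorted_wrt (<) (map f [0..<k])"
    unfolding sorted_wrt_iff_nth_less using assms by (auto simp: strict_mono_on_def)
  then show ?thesis
    by (intro sorted_distinct_set_unique) (auto simp: strict_sorted_iff)
qed

lemma homogeneous_subsequence:
  fixes x :: "nat \<Rightarrow> 'b" and P :: "'a \<Rightarrow> 'b list \<Rightarrow> bool" and r :: "'a \<Rightarrow> nat"
  assumes "finite \<Phi>"
  obtains e :: "nat \<Rightarrow> nat" where "strict_mono e"
    "\<And>\<phi> s t. \<phi> \<in> \<Phi> \<Longrightarrow> strict_mono_on {..<r \<phi>} s \<Longrightarrow> strict_mono_on {..<r \<phi>} t \<Longrightarrow>
       P \<phi> (map (x \<circ> e \<circ> s) [0..<r \<phi>]) = P \<phi> (map (x \<circ> e \<circ> t) [0..<r \<phi>])"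
proof -
  obtain H where H: "infinite H"
    "\<forall>\<phi>\<in>\<Phi>. \<exists>b. \<forall>X. X \<subseteq> H \<and> finite X \<and> card X = r \<phi> \<longrightarrow> P \<phi> (map x (sorted_list_of_set X)) = b"
    using Ramsey_finite_family[OF assms, where c = "\<lambda>\<phi> X. P \<phi> (map x (sorted_list_of_set X))" and r = r]
    by blast
  define e where "e = enumerate H"
  have e: "strict_mono e" "\<And>i. e i \<in> H"
    using H(1) by (simp_all add: e_def strict_mono_def enumerate_mono enumerate_in_set)
  have homogeneous: "P \<phi> (map (x \<circ> e \<circ> s) [0..<r \<phi>]) = b"
    if b: "\<forall>X. X \<subseteq> H \<and> finite X \<and> card X = r \<phi> \<longrightarrow> P \<phi> (map x (sorted_list_of_set X)) = b"
      and s: "strict_mono_on {..<r \<phi>} s" for \<phi> b s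
  proof -
    have es: "strict_mono_on {..<r \<phi>} (e \<circ> s)"
      using e(1) s by (simp add: strict_mono_on_def strict_mono_def)
    have "card ((e \<circ> s) ` {..<r \<phi>}) = r \<phi>"
      using card_image[OF strict_mono_on_imp_inj_on[OF es]] by simp
    moreover have "(e \<circ> s) ` {..<r \<phi>} \<subseteq> H"
      using e(2) by auto
    ultimately have "P \<phi> (map x (sorted_list_of_set ((e \<circ> s) ` {..<r \<phi>}))) = b"
      using b by blast
    then show ?thesis
      unfolding sorted_list_of_set_image_strict_mono_on[OF es] by (simp add: comp_assoc)
  qed
  show thesis
  proof (rule that[OF e(1)])
    fix \<phi> and s t :: "nat \<Rightarrow> nat"
    assume "\<phi> \<in> \<Phi>" and s: "strict_mono_on {..<r \<phi>} s" and t: "strict_mono_on {..<r \<phi>} t"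
    then obtain b where b: "\<forall>X. X \<subseteq> H \<and> finite X \<and> card X = r \<phi> \<longrightarrow> P \<phi> (map x (sorted_list_of_set X)) = b"
      using H(2) by blast
    show "P \<phi> (map (x \<circ> e \<circ> s) [0..<r \<phi>]) = P \<phi> (map (x \<circ> e \<circ> t) [0..<r \<phi>])"
      using homogeneous[OF b s] homogeneous[OF b t] by simp
  qed
qed

text \<open>Variable \<open>3\<langle>i,p\<rangle>\<close> holds the \<open>p\<close>-th entry of the \<open>i\<close>-th tuple of the sequence being
  built, \<open>3\<langle>j,p\<rangle> + 1\<close> the \<open>p\<close>-th entry of the \<open>j\<close>-th witness, and the variables
  \<open>3m + 2\<close> are spare.\<close>

definition avar :: "nat \<Rightarrow> nat \<Rightarrow> nat" where
  "avar i p = 3 * prod_encode (i, p)"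

definition cvar :: "nat \<Rightarrow> nat \<Rightarrow> nat" where
  "cvar j p = 3 * prod_encode (j, p) + 1"

definition spare :: "nat \<Rightarrow> nat" where
  "spare m = 3 * m + 2"

lemma avar_eq_iff [simp]: "avar i p = avar i' p' \<longleftrightarrow> i = i' \<and> p = p'"
  by (auto simp: avar_def)

lemma cvar_eq_iff [simp]: "cvar j p = cvar j' p' \<longleftrightarrow> j = j' \<and> p = p'"
  by (auto simp: cvar_def)

lemma spare_eq_iff [simp]: "spare m = spare m' \<longleftrightarrow> m = m'"
  by (auto simp: spare_def)

lemma avar_neq_cvar [simp]: "avar i p \<noteq> cvar j q" "cvar j q \<noteq> avar i p"
  by (auto simp: avar_def cvar_def; presburger)+

lemma spare_neq [simp]:
  "avar i p \<noteq> spare m" "spare m \<noteq> avar i p" "cvar j q \<noteq> spare m" "spare m \<noteq> cvar j q"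
  by (auto simp: avar_def cvar_def spare_def; presburger)+

definition avars :: "nat \<Rightarrow> nat \<Rightarrow> nat \<Rightarrow> nat list" where
  "avars i off n = map (\<lambda>p. avar i (off + p)) [0..<n]"

definition cvars :: "nat \<Rightarrow> nat \<Rightarrow> nat list" where
  "cvars j n = map (cvar j) [0..<n]"

definition blocks :: "nat \<Rightarrow> (nat \<Rightarrow> nat) \<Rightarrow> nat \<Rightarrow> nat list" where
  "blocks n s k = map (\<lambda>(q, p). avar (s q) p) (List.product [0..<k] [0..<n])"

lemma distinct_avars_cvars: "distinct (cvars j m @ avars i off n)"
  by (auto simp: avars_def cvars_def distinct_map inj_on_def)

lemma distinct_blocks: "inj_on s {..<k} \<Longrightarrow> distinct (blocks n s k)"
  unfolding blocks_def
  by (auto simp: distinct_map distinct_product inj_on_def)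

lemma length_blocks [simp]: "length (blocks n s k) = k * n"
  by (simp add: blocks_def)

lemma blocks_avoid_spare: "set (blocks n s k) \<inter> range spare = {}"
  by (auto simp: blocks_def)

lemma avars_cvars_avoid_spare: "set (cvars j m @ avars i off n) \<inter> range spare = {}"
proof -
  have "set (cvars j m) \<inter> range spare = {}" "set (avars i off n) \<inter> range spare = {}"
    by (auto simp: cvars_def avars_def)
  then show ?thesis
    by (simp add: Int_Un_distrib2)
qed

definition atuple :: "nat \<Rightarrow> (nat \<Rightarrow> 'm) \<Rightarrow> nat \<Rightarrow> 'm list" where
  "atuple n V i = map V (avars i 0 n)"

lemma length_atuple [simp]: "length (atuple n V i) = n"
  by (simp add: atuple_def avars_def)

lemma take_drop_atuple:
  "take n (atuple (2 * n) V i) = map V (avars i 0 n)"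
  "drop n (atuple (2 * n) V i) = map V (avars i n n)"
  by (intro nth_equalityI; simp add: atuple_def avars_def)+

lemma map_blocks: "map V (blocks n s k) = concat (map (atuple n V \<circ> s) [0..<k])"
  by (simp add: blocks_def atuple_def avars_def product_concat_map map_concat comp_def)

text \<open>Moving every other variable to a spare one keeps the renaming injective, so that
  renaming a formula by it is capture-free.\<close>

definition relabel :: "nat list \<Rightarrow> nat list \<Rightarrow> nat \<Rightarrow> nat" where
  "relabel vs ds m = (if m \<in> set vs then assign vs ds m else spare m)"

lemma inj_relabel:
  assumes "distinct vs" "distinct ds" "length ds = length vs" "set ds \<inter> range spare = {}"
  shows "inj (relabel vs ds)"
proof
  fix m m' assume eq: "relabel vs ds m = relabel vs ds m'"
  have in_ds: "relabel vs ds k \<in> set ds" if "k \<in> set vs" for k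
    using assign_in_set[OF assms(1,3) that] that by (simp add: relabel_def)
  have in_spare: "relabel vs ds k \<in> range spare" if "k \<notin> set vs" for k
    using that by (simp add: relabel_def)
  show "m = m'"
  proof (cases "m \<in> set vs"; cases "m' \<in> set vs")
    assume "m \<in> set vs" "m' \<in> set vs"
    then show ?thesis
      using eq inj_onD[OF inj_on_assign[OF assms(1-3)]] by (simp add: relabel_def)
  next
    assume "m \<in> set vs" "m' \<notin> set vs"
    then show ?thesis
      using eq in_ds[of m] in_spare[of m'] assms(4) by (metis IntI empty_iff)
  next
    assume "m \<notin> set vs" "m' \<in> set vs"
    then show ?thesis
      using eq in_ds[of m'] in_spare[of m] assms(4) by (metis IntI empty_iff)
  next
    assume "m \<notin> set vs" "m' \<notin> set vs"
    then show ?thesis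
      using eq by (simp add: relabel_def)
  qed
qed

lemma sat_rename_relabel:
  assumes "distinct vs" "distinct ds" "length ds = length vs" "set ds \<inter> range spare = {}"
    and "fv \<chi> \<subseteq> set vs"
  shows "sat F R V (rename (relabel vs ds) \<chi>) = sat F R (assign vs (map V ds)) \<chi>"
  unfolding sat_rename[OF inj_relabel[OF assms(1-4)]]
  using assms by (intro sat_cong) (auto simp: relabel_def assign_map)

definition tuple_val :: "(nat \<Rightarrow> 'm list) \<Rightarrow> (nat \<Rightarrow> 'm list) \<Rightarrow> nat \<Rightarrow> 'm" where
  "tuple_val A C m =
     (case prod_decode (m div 3) of (i, p) \<Rightarrow> if m mod 3 = 0 then A i ! p else C i ! p)"

lemma tuple_val_avars:
  "off + n \<le> length (A i) \<Longrightarrow> map (tuple_val A C) (avars i off n) = take n (drop off (A i))"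
  by (intro nth_equalityI) (auto simp: tuple_val_def avars_def avar_def)

lemma tuple_val_cvars: "length (C j) = n \<Longrightarrow> map (tuple_val A C) (cvars j n) = C j"
proof (intro nth_equalityI)
  have "Suc (3 * x) div 3 = x" for x :: nat
    by presburger
  then show "map (tuple_val A C) (cvars j n) ! p = C j ! p" if "p < length (map (tuple_val A C) (cvars j n))" for p
    using that by (simp add: tuple_val_def cvars_def cvar_def)
qed (simp add: cvars_def)

section \<open>Indiscernibility as a set of formulas\<close>

definition indisc_data :: "nat \<Rightarrow> (('f, 'r) fm \<times> nat \<times> nat list \<times> (nat \<Rightarrow> nat) \<times> (nat \<Rightarrow> nat)) set" where
  "indisc_data n = {(\<chi>, k, vs, s, t). length vs = k * n \<and> distinct vs \<and> fv \<chi> \<subseteq> set vs \<and>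
     strict_mono_on {..<k} s \<and> strict_mono_on {..<k} t}"

definition indisc_formula ::
    "nat \<Rightarrow> ('f, 'r) fm \<times> nat \<times> nat list \<times> (nat \<Rightarrow> nat) \<times> (nat \<Rightarrow> nat) \<Rightarrow> ('f, 'r) fm" where
  "indisc_formula n = (\<lambda>(\<chi>, k, vs, s, t).
     Iff (rename (relabel vs (blocks n s k)) \<chi>) (rename (relabel vs (blocks n t k)) \<chi>))"

lemma sat_indisc_formula:
  assumes "(\<chi>, k, vs, s, t) \<in> indisc_data n"
  shows "sat F R V (indisc_formula n (\<chi>, k, vs, s, t)) \<longleftrightarrow>
    (sat F R (assign vs (concat (map (atuple n V \<circ> s) [0..<k]))) \<chi> \<longleftrightarrow>
     sat F R (assign vs (concat (map (atuple n V \<circ> t) [0..<k]))) \<chi>)"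
proof -
  have "sat F R V (rename (relabel vs (blocks n u k)) \<chi>) =
      sat F R (assign vs (concat (map (atuple n V \<circ> u) [0..<k]))) \<chi>"
    if "strict_mono_on {..<k} u" for u
    using assms strict_mono_on_imp_inj_on[OF that]
    by (subst sat_rename_relabel) (auto simp: indisc_data_def distinct_blocks blocks_avoid_spare map_blocks)
  then show ?thesis
    using assms by (simp add: indisc_formula_def indisc_data_def)
qed

lemma indiscernible_if_sat_indisc_formulas:
  fixes F :: "'f \<Rightarrow> 'm list \<Rightarrow> 'm" and R :: "'r \<Rightarrow> 'm list \<Rightarrow> bool"
  assumes "\<forall>\<phi>\<in>indisc_formula n ` indisc_data n. sat F R V \<phi>"
  shows "indiscernible F R n (atuple n V)"
  unfolding indiscernible_def
proof (intro conjI allI impI)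
  show "length (atuple n V i) = n" for i
    by (simp add: atuple_def avars_def)
next
  fix \<chi> :: "('f, 'r) fm" and k vs and s t :: "nat \<Rightarrow> nat"
  assume "length vs = k * n" "distinct vs" "fv \<chi> \<subseteq> set vs"
    "strict_mono_on {..<k} s" "strict_mono_on {..<k} t"
  then have d: "(\<chi>, k, vs, s, t) \<in> indisc_data n"
    by (simp add: indisc_data_def)
  show "sat F R (assign vs (concat (map (atuple n V \<circ> s) [0..<k]))) \<chi> \<longleftrightarrow>
      sat F R (assign vs (concat (map (atuple n V \<circ> t) [0..<k]))) \<chi>"
    using assms[rule_format, OF imageI[OF d]] sat_indisc_formula[OF d, of F R V] by blast
qed

lemma indisc_formulas_homogeneous_subsequence:
  fixes F :: "'f \<Rightarrow> 'm list \<Rightarrow> 'm" and R :: "'r \<Rightarrow> 'm list \<Rightarrow> bool"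
    and x :: "nat \<Rightarrow> 'm list" and D :: "(('f, 'r) fm \<times> nat \<times> nat list \<times> (nat \<Rightarrow> nat) \<times> (nat \<Rightarrow> nat)) set"
  assumes "finite D" "D \<subseteq> indisc_data n" "\<And>i. length (x i) = n"
  obtains e :: "nat \<Rightarrow> nat" where "strict_mono e"
    "\<And>d C. d \<in> D \<Longrightarrow> sat F R (tuple_val (x \<circ> e) C) (indisc_formula n d)"
proof -
  define P :: "('f, 'r) fm \<times> nat \<times> nat list \<Rightarrow> 'm list list \<Rightarrow> bool"
    where "P = (\<lambda>(\<chi>, k, vs) ts. sat F R (assign vs (concat ts)) \<chi>)"
  obtain e :: "nat \<Rightarrow> nat" where e: "strict_mono e"
    "\<And>\<phi> s t. \<phi> \<in> (\<lambda>(\<chi>, k, vs, s, t). (\<chi>, k, vs)) ` D \<Longrightarrow>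
       strict_mono_on {..<fst (snd \<phi>)} s \<Longrightarrow> strict_mono_on {..<fst (snd \<phi>)} t \<Longrightarrow>
       P \<phi> (map (x \<circ> e \<circ> s) [0..<fst (snd \<phi>)]) = P \<phi> (map (x \<circ> e \<circ> t) [0..<fst (snd \<phi>)])"
    by (rule homogeneous_subsequence[OF finite_imageI[OF assms(1), of "\<lambda>(\<chi>, k, vs, s, t). (\<chi>, k, vs)"],
          where P = P and x = x and r = "\<lambda>\<phi>. fst (snd \<phi>)"]) blast
  have "sat F R (tuple_val (x \<circ> e) C) (indisc_formula n d)" if "d \<in> D" for d C
  proof -
    obtain \<chi> k vs s t where d: "d = (\<chi>, k, vs, s, t)"
      using prod_cases5 by blast
    have data: "(\<chi>, k, vs, s, t) \<in> indisc_data n"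
      using that assms(2) d by blast
    have "atuple n (tuple_val (x \<circ> e) C) = x \<circ> e"
      using assms(3) by (simp add: fun_eq_iff atuple_def tuple_val_avars)
    moreover have "(\<chi>, k, vs) \<in> (\<lambda>(\<chi>, k, vs, s, t). (\<chi>, k, vs)) ` D"
      using that d by force
    ultimately show ?thesis
      using e(2)[of "(\<chi>, k, vs)" s t] data unfolding d
      by (simp add: sat_indisc_formula[OF data] P_def indisc_data_def comp_assoc)
  qed
  then show thesis
    using that e(1) by blast
qed

lemma infty_COP_witnesses:
  assumes "infty_COP F R \<theta> xs ys"
  obtains a b :: "nat \<Rightarrow> 'm list" where
    "\<forall>i. length (a i) = length ys \<and> length (b i) = length ys"
    "\<forall>c i j. length c = length xs \<and> holds F R \<theta> xs ys c (a i) \<and> holds F R \<theta> xs ys c (b j) \<longrightarrow> i < j"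
    "\<forall>(e :: nat \<Rightarrow> nat) N j. strict_mono e \<longrightarrow> (\<exists>c. length c = length xs \<and>
       (\<forall>i\<le>j. holds F R \<theta> xs ys c (a (e i))) \<and> (\<forall>i. j < i \<and> i < N \<longrightarrow> holds F R \<theta> xs ys c (b (e i))))"
proof -
  obtain a b :: "nat \<Rightarrow> 'm list" where len: "\<forall>i. length (a i) = length ys \<and> length (b i) = length ys"
    and iff: "\<forall>(m :: nat) (I :: nat \<Rightarrow> nat) J. (\<exists>c. length c = length xs \<and>
        (\<forall>k<m. holds F R \<theta> xs ys c (a (I k)) \<and> holds F R \<theta> xs ys c (b (J k))))
      \<longleftrightarrow> (\<forall>k<m. \<forall>l<m. I k < J l)"
    using assms unfolding infty_COP_def by blast
  have "i < j"
    if "length c = length xs" "holds F R \<theta> xs ys c (a i)" "holds F R \<theta> xs ys c (b j)" for c i j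
    using iff[rule_format, of 1 "\<lambda>_. i" "\<lambda>_. j"] that by auto
  moreover have "\<exists>c. length c = length xs \<and>
       (\<forall>i\<le>j. holds F R \<theta> xs ys c (a (e i))) \<and> (\<forall>i. j < i \<and> i < N \<longrightarrow> holds F R \<theta> xs ys c (b (e i)))"
    if "strict_mono e" for e :: "nat \<Rightarrow> nat" and N j
  proof -
    \<comment> \<open>\<open>P\<^sub>2\<^sub>m\<close> with the \<open>a\<close>-indices \<open>e 0, \<dots>, e j\<close> and the \<open>b\<close>-indices \<open>e (j + 1), \<dots>, e (N + j)\<close>\<close>
    let ?m = "N + Suc j" and ?I = "\<lambda>k. e (min k j)" and ?J = "\<lambda>k. e (max k (Suc j))"
    have "\<forall>k<?m. \<forall>l<?m. ?I k < ?J l"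
      using that by (auto simp: strict_mono_less)
    then obtain c where c: "length c = length xs"
      "\<forall>k<?m. holds F R \<theta> xs ys c (a (?I k)) \<and> holds F R \<theta> xs ys c (b (?J k))"
      using iff[rule_format, of ?m ?I ?J] by blast
    have "holds F R \<theta> xs ys c (a (e i))" if "i \<le> j" for i
      using c(2)[rule_format, of i] that by (simp add: min_absorb1)
    moreover have "holds F R \<theta> xs ys c (b (e i))" if "j < i" "i < N" for i
      using c(2)[rule_format, of i] that by (simp add: max_absorb1)
    ultimately show ?thesis
      using c(1) by blast
  qed
  ultimately show thesis
    using len by (intro that[of a b]) blast+
qed

section \<open>The \<open>SOP\<^sub>3\<close> configuration\<close>

definition psi_of :: "('f, 'r) fm \<Rightarrow> nat list \<Rightarrow> ('f, 'r) fm" where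
  "psi_of \<theta> xs = rename (\<lambda>n. if n \<in> set xs then 2 * n else 2 * n + 1) \<theta>"

lemma phi_of_psi_of: "phi_of \<theta> xs = Conj (rename (\<lambda>n. 2 * n) \<theta>) (Neg (psi_of \<theta> xs))"
  by (simp add: phi_of_def psi_of_def)

lemma inj_psi_renaming: "inj (\<lambda>n::nat. if n \<in> set xs then 2 * n else 2 * n + 1)"
  unfolding inj_def by (auto split: if_splits; presburger)

context
  fixes F :: "'f \<Rightarrow> 'm list \<Rightarrow> 'm" and R :: "'r \<Rightarrow> 'm list \<Rightarrow> bool"
    and \<theta> :: "('f, 'r) fm" and xs ys :: "nat list"
  assumes distinct_xs_ys: "distinct (xs @ ys)" and fv_\<theta>: "fv \<theta> \<subseteq> set xs \<union> set ys"
begin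

abbreviation xvars :: "nat list" where
  "xvars \<equiv> map (\<lambda>n. 2 * n) xs"

abbreviation yzvars :: "nat list" where
  "yzvars \<equiv> map (\<lambda>n. 2 * n) ys @ map (\<lambda>n. 2 * n + 1) ys"

lemma holds_phi_of_psi_of:
  assumes c: "length c = length xs" and d: "length d = 2 * length ys"
  shows "holds F R (phi_of \<theta> xs) xvars yzvars c d \<longleftrightarrow>
      holds F R \<theta> xs ys c (take (length ys) d) \<and> \<not> holds F R \<theta> xs ys c (drop (length ys) d)"
    and "holds F R (psi_of \<theta> xs) xvars yzvars c d \<longleftrightarrow> holds F R \<theta> xs ys c (drop (length ys) d)"
proof -
  define u where "u = assign (xvars @ yzvars) (c @ d)"
  have "distinct (map (\<lambda>n. 2 * n) (xs @ ys) @ map (\<lambda>n. 2 * n + 1) ys)"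
    using distinct_xs_ys by (auto simp: distinct_map inj_on_def; presburger)
  then have "map u (xvars @ yzvars) = c @ d"
    unfolding u_def using c d by (intro map_assign) auto
  then have ux: "map u xvars = c" and uy: "map u (map (\<lambda>n. 2 * n) ys) = take (length ys) d"
    and uz: "map u (map (\<lambda>n. 2 * n + 1) ys) = drop (length ys) d"
    using c by (auto simp: append_eq_append_conv append_eq_conv_conj)
  define g where "g n = (if n \<in> set xs then 2 * n else 2 * n + 1)" for n :: nat
  have "map (u \<circ> g) xs = c"
    unfolding ux[symmetric] by (simp add: g_def)
  moreover have "map (u \<circ> g) ys = drop (length ys) d"
    unfolding uz[symmetric] using distinct_xs_ys by (auto simp: g_def)
  moreover have "inj g"
    using inj_psi_renaming unfolding g_def .
  ultimately have "sat F R u (psi_of \<theta> xs) \<longleftrightarrow> holds F R \<theta> xs ys c (drop (length ys) d)"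
    unfolding psi_of_def g_def[symmetric]
    by (simp add: sat_rename sat_eq_holds[OF distinct_xs_ys fv_\<theta>])
  moreover have "sat F R u (rename (\<lambda>n. 2 * n) \<theta>) \<longleftrightarrow> holds F R \<theta> xs ys c (take (length ys) d)"
    using ux uy by (simp add: inj_def sat_rename sat_eq_holds[OF distinct_xs_ys fv_\<theta>] comp_def)
  ultimately show "holds F R (phi_of \<theta> xs) xvars yzvars c d \<longleftrightarrow>
      holds F R \<theta> xs ys c (take (length ys) d) \<and> \<not> holds F R \<theta> xs ys c (drop (length ys) d)"
    and "holds F R (psi_of \<theta> xs) xvars yzvars c d \<longleftrightarrow> holds F R \<theta> xs ys c (drop (length ys) d)"
    by (simp_all add: holds_def phi_of_psi_of u_def)
qed

definition theta_at :: "nat \<Rightarrow> nat \<Rightarrow> nat \<Rightarrow> ('f, 'r) fm" where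
  "theta_at j i off = rename (relabel (xs @ ys) (cvars j (length xs) @ avars i off (length ys))) \<theta>"

lemma sat_theta_at:
  "sat F R V (theta_at j i off) \<longleftrightarrow>
     holds F R \<theta> xs ys (map V (cvars j (length xs))) (map V (avars i off (length ys)))"
proof -
  have "length (cvars j (length xs) @ avars i off (length ys)) = length (xs @ ys)"
    by (simp add: cvars_def avars_def)
  then show ?thesis
    unfolding theta_at_def holds_def
    using distinct_xs_ys distinct_avars_cvars avars_cvars_avoid_spare fv_\<theta>
    by (subst sat_rename_relabel) simp_all
qed

text \<open>The \<open>x\<close>-variables are bound in the slots of the witness \<open>C\<^sub>0\<close>; any variables disjoint
  from those of the sequence would do.\<close>

definition incompatible :: "nat \<Rightarrow> nat \<Rightarrow> ('f, 'r) fm" where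
  "incompatible i j =
     Exs (cvars 0 (length xs)) (Conj (theta_at 0 j 0) (theta_at 0 i (length ys)))"

lemma sat_incompatible:
  "sat F R V (incompatible i j) \<longleftrightarrow> (\<exists>c. length c = length xs \<and>
     holds F R \<theta> xs ys c (map V (avars j 0 (length ys))) \<and>
     holds F R \<theta> xs ys c (map V (avars i (length ys) (length ys))))"
proof
  assume "sat F R V (incompatible i j)"
  then obtain u where u: "\<forall>k. k \<notin> set (cvars 0 (length xs)) \<longrightarrow> u k = V k"
    "sat F R u (theta_at 0 j 0)" "sat F R u (theta_at 0 i (length ys))"
    by (auto simp: incompatible_def sat_Exs)
  have "avar l p \<notin> set (cvars 0 (length xs))" for l p
    by (auto simp: cvars_def)
  then have uV: "map u (avars l off (length ys)) = map V (avars l off (length ys))" for l off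
    using u(1) by (simp add: avars_def)
  have "length (map u (cvars 0 (length xs))) = length xs"
    by (simp add: cvars_def)
  then show "\<exists>c. length c = length xs \<and>
     holds F R \<theta> xs ys c (map V (avars j 0 (length ys))) \<and>
     holds F R \<theta> xs ys c (map V (avars i (length ys) (length ys)))"
    using u(2,3) unfolding sat_theta_at uV by blast
next
  assume "\<exists>c. length c = length xs \<and>
     holds F R \<theta> xs ys c (map V (avars j 0 (length ys))) \<and>
     holds F R \<theta> xs ys c (map V (avars i (length ys) (length ys)))"
  then obtain c where c: "length c = length xs"
    "holds F R \<theta> xs ys c (map V (avars j 0 (length ys)))"
    "holds F R \<theta> xs ys c (map V (avars i (length ys) (length ys)))"
    by blast
  define u where "u k = (if k \<in> set (cvars 0 (length xs)) then assign (cvars 0 (length xs)) c k else V k)" for k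
  have "map u (cvars 0 (length xs)) = map (assign (cvars 0 (length xs)) c) (cvars 0 (length xs))"
    by (simp add: u_def)
  also have "\<dots> = c"
    using c(1) by (intro map_assign) (simp_all add: cvars_def distinct_map inj_on_def)
  finally have uc: "map u (cvars 0 (length xs)) = c" .
  have "avar l p \<notin> set (cvars 0 (length xs))" for l p
    by (auto simp: cvars_def)
  then have uV: "map u (avars l off (length ys)) = map V (avars l off (length ys))" for l off
    by (simp add: u_def avars_def)
  have "sat F R u (theta_at 0 j 0)" "sat F R u (theta_at 0 i (length ys))"
    unfolding sat_theta_at uc uV using c(2,3) by simp_all
  moreover have "\<forall>k. k \<notin> set (cvars 0 (length xs)) \<longrightarrow> u k = V k"
    by (simp add: u_def)
  ultimately show "sat F R V (incompatible i j)"
    unfolding incompatible_def sat_Exs by (intro exI[of _ u]) simp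
qed

text \<open>A valuation \<open>V\<close> satisfying these formulas yields the sequence
  \<open>A\<^sub>i = atuple (2 * length ys) V i\<close>, read as \<open>a\<^sub>i b\<^sub>i\<close>, and the witnesses
  \<open>C\<^sub>j = map V (cvars j (length xs))\<close>; the formulas say that the \<open>A\<^sub>i\<close> are indiscernible and
  that clauses (2) and (3) of \<open>SOP\<^sub>3\<close> hold for \<open>\<psi>(x; y, z) = \<theta>(x; z)\<close>.\<close>

definition sop3_conditions :: "('f, 'r) fm set" where
  "sop3_conditions =
     indisc_formula (2 * length ys) ` indisc_data (2 * length ys)
     \<union> {theta_at j i 0 | i j. i \<le> j}
     \<union> {Neg (theta_at j i (length ys)) | i j. i \<le> j}
     \<union> (\<lambda>(i, j). theta_at j i (length ys)) ` {(i, j). j < i}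
     \<union> {Neg (incompatible i j) | i j. i < j}"

lemma sop3_clause2_if_sat:
  assumes V: "\<forall>\<phi>\<in>sop3_conditions. sat F R V \<phi>"
  shows "i \<le> j \<Longrightarrow> holds F R (phi_of \<theta> xs) xvars yzvars
      (map V (cvars j (length xs))) (atuple (2 * length ys) V i)"
    and "j < i \<Longrightarrow> holds F R (psi_of \<theta> xs) xvars yzvars
      (map V (cvars j (length xs))) (atuple (2 * length ys) V i)"
proof -
  have lc: "length (map V (cvars j (length xs))) = length xs"
    by (simp add: cvars_def)
  have la: "length (atuple (2 * length ys) V i) = 2 * length ys"
    by simp
  show "holds F R (phi_of \<theta> xs) xvars yzvars (map V (cvars j (length xs))) (atuple (2 * length ys) V i)"
    if "i \<le> j"
  proof -
    from that have "theta_at j i 0 \<in> sop3_conditions" "Neg (theta_at j i (length ys)) \<in> sop3_conditions"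
      unfolding sop3_conditions_def by blast+
    then have "sat F R V (theta_at j i 0)" "\<not> sat F R V (theta_at j i (length ys))"
      using V by auto
    then show ?thesis
      unfolding holds_phi_of_psi_of(1)[OF lc la] take_drop_atuple sat_theta_at by blast
  qed
  show "holds F R (psi_of \<theta> xs) xvars yzvars (map V (cvars j (length xs))) (atuple (2 * length ys) V i)"
    if "j < i"
  proof -
    from that have "theta_at j i (length ys) \<in> (\<lambda>(i, j). theta_at j i (length ys)) ` {(i, j). j < i}"
      by (auto intro: image_eqI[of _ _ "(i, j)"])
    then have "sat F R V (theta_at j i (length ys))"
      using V unfolding sop3_conditions_def by blast
    then show ?thesis
      unfolding holds_phi_of_psi_of(2)[OF lc la] take_drop_atuple sat_theta_at .
  qed
qed

lemma sop3_clause3_if_sat: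
  assumes V: "\<forall>\<phi>\<in>sop3_conditions. sat F R V \<phi>" and "i < j"
  shows "\<not> (\<exists>c. length c = length xvars \<and>
    holds F R (phi_of \<theta> xs) xvars yzvars c (atuple (2 * length ys) V j) \<and>
    holds F R (psi_of \<theta> xs) xvars yzvars c (atuple (2 * length ys) V i))"
proof
  assume "\<exists>c. length c = length xvars \<and>
    holds F R (phi_of \<theta> xs) xvars yzvars c (atuple (2 * length ys) V j) \<and>
    holds F R (psi_of \<theta> xs) xvars yzvars c (atuple (2 * length ys) V i)"
  then obtain c where c: "length c = length xs"
    "holds F R (phi_of \<theta> xs) xvars yzvars c (atuple (2 * length ys) V j)"
    "holds F R (psi_of \<theta> xs) xvars yzvars c (atuple (2 * length ys) V i)"
    by auto
  have "holds F R \<theta> xs ys c (map V (avars j 0 (length ys)))"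
    using c(2) unfolding holds_phi_of_psi_of(1)[OF c(1) length_atuple] take_drop_atuple by blast
  moreover have "holds F R \<theta> xs ys c (map V (avars i (length ys) (length ys)))"
    using c(3) unfolding holds_phi_of_psi_of(2)[OF c(1) length_atuple] take_drop_atuple .
  ultimately have "sat F R V (incompatible i j)"
    unfolding sat_incompatible using c(1) by blast
  moreover have "Neg (incompatible i j) \<in> sop3_conditions"
    using assms(2) unfolding sop3_conditions_def by blast
  ultimately show False
    using V by auto
qed

lemma has_SOP3_if_sat_sop3_conditions:
  assumes V: "\<forall>\<phi>\<in>sop3_conditions. sat F R V \<phi>"
  shows "has_SOP3 F R (phi_of \<theta> xs) xvars yzvars"
proof -
  define A where "A = atuple (2 * length ys) V"
  define C where "C j = map V (cvars j (length xs))" for j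
  have "fv (psi_of \<theta> xs) \<subseteq> set xvars \<union> set yzvars"
    using fv_\<theta> by (auto simp: psi_of_def fv_rename[OF inj_psi_renaming])
  moreover have "indiscernible F R (length yzvars) A"
    using indiscernible_if_sat_indisc_formulas[of "2 * length ys" F R V] V
    by (simp add: A_def sop3_conditions_def mult_2)
  moreover have "\<forall>j. length (C j) = length xvars"
    by (simp add: C_def cvars_def)
  moreover have "\<not> (\<exists>c d. length c = length xvars \<and> length d = length yzvars \<and>
      holds F R (phi_of \<theta> xs) xvars yzvars c d \<and> holds F R (psi_of \<theta> xs) xvars yzvars c d)"
    using holds_phi_of_psi_of by auto
  moreover have "\<forall>i j. (i \<le> j \<longrightarrow> holds F R (phi_of \<theta> xs) xvars yzvars (C j) (A i)) \<and>
      (j < i \<longrightarrow> holds F R (psi_of \<theta> xs) xvars yzvars (C j) (A i))"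
    unfolding A_def C_def using sop3_clause2_if_sat[OF V] by blast
  moreover have "\<forall>i j. i < j \<longrightarrow> \<not> (\<exists>c. length c = length xvars \<and>
      holds F R (phi_of \<theta> xs) xvars yzvars c (A j) \<and> holds F R (psi_of \<theta> xs) xvars yzvars c (A i))"
    unfolding A_def using sop3_clause3_if_sat[OF V] by blast
  ultimately show ?thesis
    unfolding has_SOP3_def by blast
qed

lemma sat_sop3_conditions_witness:
  fixes a b cs :: "nat \<Rightarrow> 'm list" and e :: "nat \<Rightarrow> nat"
  assumes len: "\<forall>i. length (a i) = length ys \<and> length (b i) = length ys"
    and order: "\<forall>c i j. length c = length xs \<and> holds F R \<theta> xs ys c (a i) \<and> holds F R \<theta> xs ys c (b j) \<longrightarrow> i < j"
    and e: "strict_mono e"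
    and cs: "\<forall>j. length (cs j) = length xs \<and> (\<forall>i\<le>j. holds F R \<theta> xs ys (cs j) (a (e i))) \<and>
      (\<forall>i. j < i \<and> i < N \<longrightarrow> holds F R \<theta> xs ys (cs j) (b (e i)))"
  defines "w \<equiv> tuple_val ((\<lambda>i. a i @ b i) \<circ> e) cs"
  shows "i \<le> j \<Longrightarrow> sat F R w (theta_at j i 0)"
    and "i \<le> j \<Longrightarrow> sat F R w (Neg (theta_at j i (length ys)))"
    and "j < i \<Longrightarrow> i < N \<Longrightarrow> sat F R w (theta_at j i (length ys))"
    and "i < j \<Longrightarrow> sat F R w (Neg (incompatible i j))"
proof -
  have wa: "map w (avars i 0 (length ys)) = a (e i)"
    and wb: "map w (avars i (length ys) (length ys)) = b (e i)" for i
    using len by (simp_all add: w_def tuple_val_avars)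
  have "length (cs j) = length xs" for j
    using cs by blast
  then have wc: "map w (cvars j (length xs)) = cs j" for j
    unfolding w_def by (rule tuple_val_cvars)
  show "sat F R w (theta_at j i 0)" if "i \<le> j"
    using cs that by (simp add: sat_theta_at wa wc)
  show "sat F R w (Neg (theta_at j i (length ys)))" if "i \<le> j"
  proof -
    have "\<not> holds F R \<theta> xs ys (cs j) (b (e i))"
    proof
      assume "holds F R \<theta> xs ys (cs j) (b (e i))"
      with cs order have "e j < e i"
        by blast
      with \<open>i \<le> j\<close> e show False
        by (simp add: strict_mono_less)
    qed
    then show ?thesis
      by (simp add: sat_theta_at wb wc)
  qed
  show "sat F R w (theta_at j i (length ys))" if "j < i" "i < N"
    using cs that by (simp add: sat_theta_at wb wc)
  show "sat F R w (Neg (incompatible i j))" if "i < j"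
  proof -
    have "\<not> (holds F R \<theta> xs ys c (a (e j)) \<and> holds F R \<theta> xs ys c (b (e i)))"
      if "length c = length xs" for c
      using order[rule_format, of c "e j" "e i"] that \<open>i < j\<close> e by (auto simp: strict_mono_less)
    then show ?thesis
      by (auto simp: sat_incompatible wa wb)
  qed
qed

lemma sop3_conditions_finite_fragment:
  assumes "finite \<Delta>"
  obtains D N where "D \<subseteq> indisc_data (2 * length ys)" "finite D"
    "\<Delta> \<inter> indisc_formula (2 * length ys) ` indisc_data (2 * length ys) \<subseteq> indisc_formula (2 * length ys) ` D"
    "\<forall>\<phi>\<in>\<Delta> \<inter> (\<lambda>(i, j). theta_at j i (length ys)) ` {(i, j). j < i}.
       \<exists>i j. j < i \<and> i < N \<and> \<phi> = theta_at j i (length ys)"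
proof -
  let ?L = "length ys"
  have "finite (\<Delta> \<inter> indisc_formula (2 * ?L) ` indisc_data (2 * ?L))"
    using assms by (rule finite_Int[OF disjI1])
  from finite_subset_image[OF this Int_lower2] obtain D where D: "D \<subseteq> indisc_data (2 * ?L)" "finite D"
    "\<Delta> \<inter> indisc_formula (2 * ?L) ` indisc_data (2 * ?L) = indisc_formula (2 * ?L) ` D"
    by blast
  have "finite (\<Delta> \<inter> (\<lambda>(i, j). theta_at j i ?L) ` {(i, j). j < i})"
    using assms by (rule finite_Int[OF disjI1])
  from finite_subset_image[OF this Int_lower2] obtain P where P: "P \<subseteq> {(i, j). j < i}" "finite P"
    "\<Delta> \<inter> (\<lambda>(i, j). theta_at j i ?L) ` {(i, j). j < i} = (\<lambda>(i, j). theta_at j i ?L) ` P"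
    by blast
  from finite_nat_bounded[OF finite_imageI[OF P(2), of fst]] obtain N where N: "fst ` P \<subseteq> {..<N}"
    by blast
  have bound: "\<exists>i j. j < i \<and> i < N \<and> \<phi> = theta_at j i ?L"
    if "\<phi> \<in> \<Delta>" "\<phi> \<in> (\<lambda>(i, j). theta_at j i ?L) ` {(i, j). j < i}" for \<phi>
  proof -
    have "\<phi> \<in> (\<lambda>(i, j). theta_at j i ?L) ` P"
      using IntI[OF that] unfolding P(3) .
    then obtain p where p: "p \<in> P" "\<phi> = (\<lambda>(i, j). theta_at j i ?L) p"
      by (rule imageE)
    obtain i j where "p = (i, j)"
      by (cases p)
    with p P(1) N show ?thesis
      by force
  qed
  show thesis
    by (rule that[OF D(1,2) equalityD1[OF D(3)]]) (use bound in blast)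
qed

lemma sop3_conditions_finitely_satisfiable:
  assumes cop: "infty_COP F R \<theta> xs ys"
  shows "\<forall>\<Delta>\<subseteq>sop3_conditions. finite \<Delta> \<longrightarrow> (\<exists>w. \<forall>\<phi>\<in>\<Delta>. sat F R w \<phi>)"
proof (intro allI impI)
  fix \<Delta> assume \<Delta>: "\<Delta> \<subseteq> sop3_conditions" "finite \<Delta>"
  let ?L = "length ys"
  obtain a b :: "nat \<Rightarrow> 'm list" where
    len: "\<forall>i. length (a i) = length ys \<and> length (b i) = length ys"
    and order: "\<forall>c i j. length c = length xs \<and> holds F R \<theta> xs ys c (a i) \<and> holds F R \<theta> xs ys c (b j) \<longrightarrow> i < j"
    and chain: "\<forall>(e :: nat \<Rightarrow> nat) N j. strict_mono e \<longrightarrow> (\<exists>c. length c = length xs \<and>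
       (\<forall>i\<le>j. holds F R \<theta> xs ys c (a (e i))) \<and> (\<forall>i. j < i \<and> i < N \<longrightarrow> holds F R \<theta> xs ys c (b (e i))))"
    by (rule infty_COP_witnesses[OF cop])
  obtain D N where D: "D \<subseteq> indisc_data (2 * ?L)" "finite D"
    "\<Delta> \<inter> indisc_formula (2 * ?L) ` indisc_data (2 * ?L) \<subseteq> indisc_formula (2 * ?L) ` D"
    and N: "\<forall>\<phi>\<in>\<Delta> \<inter> (\<lambda>(i, j). theta_at j i ?L) ` {(i, j). j < i}.
       \<exists>i j. j < i \<and> i < N \<and> \<phi> = theta_at j i ?L"
    by (rule sop3_conditions_finite_fragment[OF \<Delta>(2)])
  obtain e :: "nat \<Rightarrow> nat" where e: "strict_mono e"
    "\<And>d C. d \<in> D \<Longrightarrow> sat F R (tuple_val ((\<lambda>i. a i @ b i) \<circ> e) C) (indisc_formula (2 * ?L) d)"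
    by (rule indisc_formulas_homogeneous_subsequence[OF D(2,1), of "\<lambda>i. a i @ b i" F R])
      (simp add: len, blast)
  have "\<forall>j. \<exists>c. length c = length xs \<and> (\<forall>i\<le>j. holds F R \<theta> xs ys c (a (e i))) \<and>
      (\<forall>i. j < i \<and> i < N \<longrightarrow> holds F R \<theta> xs ys c (b (e i)))"
    using chain e(1) by blast
  then obtain cs where cs: "\<forall>j. length (cs j) = length xs \<and> (\<forall>i\<le>j. holds F R \<theta> xs ys (cs j) (a (e i))) \<and>
      (\<forall>i. j < i \<and> i < N \<longrightarrow> holds F R \<theta> xs ys (cs j) (b (e i)))"
    by (metis choice)
  note witness = sat_sop3_conditions_witness[OF len order e(1) cs]
  have "sat F R (tuple_val ((\<lambda>i. a i @ b i) \<circ> e) cs) \<phi>" if \<phi>: "\<phi> \<in> \<Delta>" for \<phi>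
  proof -
    have "\<phi> \<in> sop3_conditions"
      using \<phi> \<Delta>(1) by blast
    then consider (indisc) "\<phi> \<in> indisc_formula (2 * ?L) ` indisc_data (2 * ?L)"
      | (phi) i j where "i \<le> j" "\<phi> = theta_at j i 0"
      | (not_phi) i j where "i \<le> j" "\<phi> = Neg (theta_at j i ?L)"
      | (psi) "\<phi> \<in> (\<lambda>(i, j). theta_at j i ?L) ` {(i, j). j < i}"
      | (incompatible) i j where "i < j" "\<phi> = Neg (incompatible i j)"
      unfolding sop3_conditions_def Un_iff mem_Collect_eq by blast
    then show ?thesis
    proof cases
      case indisc
      then obtain d where "d \<in> D" "\<phi> = indisc_formula (2 * ?L) d"
        using D(3) IntI[OF \<phi> indisc] by blast
      then show ?thesis
        using e(2) by simp
    next
      case psi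
      then obtain i j where "j < i" "i < N" "\<phi> = theta_at j i ?L"
        using N IntI[OF \<phi> psi] by blast
      then show ?thesis
        using witness(3) by simp
    qed (use witness(1,2,4) in simp_all)
  qed
  then show "\<exists>w. \<forall>\<phi>\<in>\<Delta>. sat F R w \<phi>"
    by blast
qed

end

theorem mainTheorem9:
  fixes F :: "'f \<Rightarrow> 'm list \<Rightarrow> 'm" and R :: "'r \<Rightarrow> 'm list \<Rightarrow> bool"
    and \<theta> :: "('f, 'r) fm" and xs ys :: "nat list"
  assumes "omega_saturated F R"
    and "distinct xs" and "distinct ys" and "set xs \<inter> set ys = {}"
    and "fv \<theta> \<subseteq> set xs \<union> set ys"
    and "infty_COP F R \<theta> xs ys"
  shows "has_SOP3 F R (phi_of \<theta> xs) (map (\<lambda>n. 2 * n) xs)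
                      (map (\<lambda>n. 2 * n) ys @ map (\<lambda>n. 2 * n + 1) ys)"
proof -
  have xs_ys: "distinct (xs @ ys)"
    using assms(2-4) by simp
  obtain V where "\<forall>\<phi>\<in>sop3_conditions \<theta> xs ys. sat F R V \<phi>"
    using omega_saturated_compact[OF assms(1) sop3_conditions_finitely_satisfiable[OF xs_ys assms(5,6)]]
    by blast
  then show ?thesis
    by (rule has_SOP3_if_sat_sop3_conditions[OF xs_ys assms(5)])
qed

end
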